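(* Let $\mathcal{B}=\{1,\dots,|\mathcal{B}|\}$ be a finite set of bins and let $N$ data points $j=1,\dots,N$ each belong to exactly one bin $B(j)\in\mathcal{B}$. For $i\in\mathcal{B}$ let $\mathcal{U}_i=\{j: B(j)=i\}$ and assume $\mathcal{U}_i\neq\emptyset$ for every $i$. Let $P_i\in(0,1]$ for $i\in\mathcal{B}$, and let $O_1,\dots,O_N$ be independent Bernoulli random variables with $\mathbb{P}(O_j=1)=P_{B(j)}$. Set $\mathcal{S}_i=\{j\in\mathcal{U}_i: O_j=1\}$. Let $\mathcal{H}=\{\hat Y_1,\dots,\hat Y_{|\mathcal{H}|}\}$ be a finite set of predictions, and for each $\hat Y\in\mathcal{H}$ and each $j$ let $\delta_j(Y,\hat Y)\in[0,\Delta]$ be a fixed (non-random) loss value, where $\Delta>0$. Let $\tilde P_i>0$, $i\in\mathcal{B}$, be given numbers (estimated propensities). Define the true risk $$R(\hat Y)=\frac{1}{|\mathcal{B}|}\sum_{i=1}^{|\mathcal{B}|}\frac{1}{|\mathcal{U}_i|}\sum_{j\in\mathcal{U}_i}\delta_j(Y,\hat Y)$$ and the VIR estimator $$\hat R_{\mathrm{VIR}}(\hat Y\mid\tilde P)=\frac{1}{|\mathcal{B}|}\sum_{i=1}^{|\mathcal{B}|}\frac{1}{|\mathcal{U}_i|}\sum_{j\in\mathcal{S}_i}\frac{\delta_j(Y,\hat Y)}{\tilde P_i},$$ and let $\hat Y^{\mathrm{ERM}}\in\operatorname{argmin}_{\hat Y\in\mathcal{H}}\hat R_{\mathrm{VIR}}(\hat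 Y\mid\tilde P)$ (a random element of $\mathcal{H}$ depending on $O$). Then for every $\eta\in(0,1)$, with probability at least $1-\eta$ over $O$, $$R(\hat Y^{\mathrm{ERM}})\le \hat R_{\mathrm{VIR}}(\hat Y^{\mathrm{ERM}}\mid\tilde P)+\frac{\Delta}{|\mathcal{B}|}\sum_{i=1}^{|\mathcal{B}|}\Big|1-\frac{P_i}{\tilde P_i}\Big|+\frac{\Delta}{|\mathcal{B}|}\sqrt{\frac{\log(2|\mathcal{H}|/\eta)}{2}}\sqrt{\sum_{i=1}^{|\mathcal{B}|}\frac{1}{\tilde P_i^{2}}}.$$
   Context: This is the generalization bound for imbalanced regression: the label space is partitioned into equal-interval bins, an imbalanced dataset is modeled as the observed subset (indicators $O_j$) of a full dataset, with observation probability ("propensity") $P_i$ depending only on the bin. $\tilde P_i$ is the smoothed label distribution used in the training objective. *)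

theory Defs
  imports "HOL-Probability.Probability"
begin

text \<open>Data points are 1..N, bins are 1..K; Bin j is the bin of data point j.\<close>

definition binU :: "nat \<Rightarrow> (nat \<Rightarrow> nat) \<Rightarrow> nat \<Rightarrow> nat set" where
  "binU N Bin i = {j \<in> {1..N}. Bin j = i}"

definition binS :: "nat \<Rightarrow> (nat \<Rightarrow> nat) \<Rightarrow> (nat \<Rightarrow> bool) \<Rightarrow> nat \<Rightarrow> nat set" where
  "binS N Bin obs i = {j \<in> binU N Bin i. obs j}"

definition true_risk :: "nat \<Rightarrow> nat \<Rightarrow> (nat \<Rightarrow> nat) \<Rightarrow> (nat \<Rightarrow> real) \<Rightarrow> real" where
  "true_risk K N Bin d =
     (1 / real K) * (\<Sum>i = 1..K. (1 / real (card (binU N Bin i))) * (\<Sum>j\<in>binU N Bin i. d j))"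

definition vir_risk :: "nat \<Rightarrow> nat \<Rightarrow> (nat \<Rightarrow> nat) \<Rightarrow> (nat \<Rightarrow> real) \<Rightarrow> (nat \<Rightarrow> bool) \<Rightarrow> (nat \<Rightarrow> real) \<Rightarrow> real" where
  "vir_risk K N Bin Pt obs d =
     (1 / real K) * (\<Sum>i = 1..K. (1 / real (card (binU N Bin i))) * (\<Sum>j\<in>binS N Bin obs i. d j / Pt i))"

definition obs_pmf :: "nat \<Rightarrow> (nat \<Rightarrow> nat) \<Rightarrow> (nat \<Rightarrow> real) \<Rightarrow> (nat \<Rightarrow> bool) pmf" where
  "obs_pmf N Bin P = Pi_pmf {1..N} False (\<lambda>j. bernoulli_pmf (P (Bin j)))"

end

theory Submission
  imports Defs
begin

text \<open>
  Every data point j of bin i enters both risks with the weight 1/(|B| |U_i|), so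
  R - E R_VIR is the weighted sum of \<delta>_j (1 - P_i/Pt_i), which is at most
  \<Delta>/|B| \<Sum>_i |1 - P_i/Pt_i|.  The estimator R_VIR is a sum of independent terms
  O_j \<delta>_j/(|B| |U_i| Pt_i), the j-th ranging over an interval of length \<Delta>/(|B| |U_i| Pt_i);
  since |U_i| \<ge> 1 the squared lengths sum to at most (\<Delta>/|B|)^2 \<Sum>_i 1/Pt_i^2.  Hoeffding's
  inequality therefore bounds the probability that R_VIR falls below its mean by more than the
  last term of the bound by \<eta>/(2|H|) for each fixed prediction, and a union bound over H makes
  the estimate hold simultaneously for all predictions, in particular for the data-dependent ERM.
\<close>

definition bin_weight :: "nat \<Rightarrow> nat \<Rightarrow> (nat \<Rightarrow> nat) \<Rightarrow> nat \<Rightarrow> real" where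
  "bin_weight K N Bin j = 1 / (real K * real (card (binU N Bin (Bin j))))"

definition vir_mean ::
    "nat \<Rightarrow> nat \<Rightarrow> (nat \<Rightarrow> nat) \<Rightarrow> (nat \<Rightarrow> real) \<Rightarrow> (nat \<Rightarrow> real) \<Rightarrow> (nat \<Rightarrow> real) \<Rightarrow> real" where
  "vir_mean K N Bin P Pt d = (\<Sum>j=1..N. bin_weight K N Bin j * d j / Pt (Bin j) * P (Bin j))"

lemma bin_weight_nonneg: "0 \<le> bin_weight K N Bin j"
  by (simp add: bin_weight_def)

lemma card_binU_pos: "binU N Bin i \<noteq> {} \<Longrightarrow> 0 < card (binU N Bin i)"
  by (simp add: binU_def card_gt_0_iff)

lemma sum_over_bins:
  fixes g :: "nat \<Rightarrow> nat \<Rightarrow> 'a::comm_monoid_add"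
  assumes bins: "\<forall>j\<in>{1..N}. Bin j \<in> {1..K}"
  shows "(\<Sum>j=1..N. g (Bin j) j) = (\<Sum>i=1..K. \<Sum>j\<in>binU N Bin i. g i j)"
proof -
  have "(\<Sum>j=1..N. g (Bin j) j) = (\<Sum>i=1..K. \<Sum>j\<in>{j \<in> {1..N}. Bin j = i}. g (Bin j) j)"
    by (rule sum.group[symmetric]) (use bins in auto)
  also have "\<dots> = (\<Sum>i=1..K. \<Sum>j\<in>binU N Bin i. g i j)"
    by (intro sum.cong refl) (auto simp: binU_def)
  finally show ?thesis .
qed

lemma true_risk_eq_sum_bin_weight:
  assumes bins: "\<forall>j\<in>{1..N}. Bin j \<in> {1..K}"
  shows "true_risk K N Bin d = (\<Sum>j=1..N. bin_weight K N Bin j * d j)"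
  using sum_over_bins[OF bins, of "\<lambda>i j. d j / (real K * real (card (binU N Bin i)))"]
  by (simp add: true_risk_def bin_weight_def sum_distrib_left)

lemma vir_risk_eq_sum_bin_weight:
  assumes bins: "\<forall>j\<in>{1..N}. Bin j \<in> {1..K}"
  shows "vir_risk K N Bin Pt obs d
    = (\<Sum>j=1..N. if obs j then bin_weight K N Bin j * d j / Pt (Bin j) else 0)"
proof -
  have "(\<Sum>j\<in>binS N Bin obs i. d j / Pt i)
      = (\<Sum>j\<in>binU N Bin i. if obs j then d j / Pt i else 0)" for i
    unfolding binS_def by (rule sum.inter_filter) (simp add: binU_def)
  then show ?thesis
    using sum_over_bins[OF bins,
        of "\<lambda>i j. if obs j then d j / (real K * real (card (binU N Bin i)) * Pt i) else 0"]
    by (simp add: vir_risk_def bin_weight_def sum_distrib_left if_distrib mult.assoc cong: if_cong)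
qed

lemma sum_bin_weight:
  assumes bins: "\<forall>j\<in>{1..N}. Bin j \<in> {1..K}"
    and nonempty_bins: "\<forall>i\<in>{1..K}. binU N Bin i \<noteq> {}"
  shows "(\<Sum>j=1..N. bin_weight K N Bin j * g (Bin j)) = (\<Sum>i=1..K. g i) / real K"
proof -
  have "(\<Sum>j=1..N. bin_weight K N Bin j * g (Bin j))
      = (\<Sum>i=1..K. \<Sum>j\<in>binU N Bin i. g i / (real K * real (card (binU N Bin i))))"
    using sum_over_bins[OF bins, of "\<lambda>i j. g i / (real K * real (card (binU N Bin i)))"]
    by (simp add: bin_weight_def)
  also have "\<dots> = (\<Sum>i=1..K. g i / real K)"
    by (intro sum.cong refl) (use nonempty_bins card_binU_pos in fastforce)
  finally show ?thesis by (simp add: sum_divide_distrib)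
qed

lemma sum_squares_bin_weight_le:
  assumes bins: "\<forall>j\<in>{1..N}. Bin j \<in> {1..K}"
    and nonempty_bins: "\<forall>i\<in>{1..K}. binU N Bin i \<noteq> {}"
  shows "(\<Sum>j=1..N. (bin_weight K N Bin j * g (Bin j))\<^sup>2) \<le> (\<Sum>i=1..K. (g i)\<^sup>2) / (real K)\<^sup>2"
proof -
  have "(bin_weight K N Bin j * g (Bin j))\<^sup>2 \<le> bin_weight K N Bin j * ((g (Bin j))\<^sup>2 / real K)"
    if j: "j \<in> {1..N}" for j
  proof -
    have "1 \<le> card (binU N Bin (Bin j))"
      using j bins nonempty_bins card_binU_pos by (metis One_nat_def Suc_leI)
    moreover have "0 < K"
      using j bins by fastforce
    ultimately have "bin_weight K N Bin j \<le> 1 / real K"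
      unfolding bin_weight_def by (intro frac_le) auto
    then have "bin_weight K N Bin j * (bin_weight K N Bin j * (g (Bin j))\<^sup>2)
        \<le> bin_weight K N Bin j * (1 / real K * (g (Bin j))\<^sup>2)"
      by (intro mult_left_mono mult_right_mono bin_weight_nonneg) auto
    then show ?thesis
      by (simp add: power2_eq_square mult_ac)
  qed
  then have "(\<Sum>j=1..N. (bin_weight K N Bin j * g (Bin j))\<^sup>2)
      \<le> (\<Sum>j=1..N. bin_weight K N Bin j * ((g (Bin j))\<^sup>2 / real K))"
    by (rule sum_mono)
  also have "\<dots> = (\<Sum>i=1..K. (g i)\<^sup>2 / real K) / real K"
    by (rule sum_bin_weight[OF bins nonempty_bins])
  also have "\<dots> = (\<Sum>i=1..K. (g i)\<^sup>2) / (real K)\<^sup>2"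
    by (simp add: sum_divide_distrib power2_eq_square)
  finally show ?thesis .
qed

lemma sum_squares_bin_weight_pos:
  assumes nonempty_bins: "\<forall>i\<in>{1..K}. binU N Bin i \<noteq> {}"
    and "0 < K" and g_pos: "\<forall>i\<in>{1..K}. 0 < g i"
  shows "0 < (\<Sum>j=1..N. (bin_weight K N Bin j * g (Bin j))\<^sup>2)"
proof -
  obtain j0 where j0: "j0 \<in> binU N Bin 1"
    using nonempty_bins \<open>0 < K\<close> by fastforce
  then have "j0 \<in> {1..N}" "Bin j0 = 1"
    by (auto simp: binU_def)
  moreover have "0 < card (binU N Bin 1)"
    using j0 card_binU_pos by blast
  moreover have "0 < g 1"
    using g_pos \<open>0 < K\<close> by simp
  ultimately have "0 < bin_weight K N Bin j0 * g (Bin j0)"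
    using \<open>0 < K\<close> by (simp add: bin_weight_def)
  then show ?thesis
    using \<open>j0 \<in> {1..N}\<close> by (intro sum_pos2[of _ j0]) auto
qed

lemma expectation_obs_indicator:
  assumes "j \<in> {1..N}" "0 \<le> P (Bin j)" "P (Bin j) \<le> 1"
  shows "measure_pmf.expectation (obs_pmf N Bin P) (\<lambda>obs. if obs j then v else 0) = v * P (Bin j)"
proof -
  have "measure_pmf.expectation (obs_pmf N Bin P) (\<lambda>obs. if obs j then v else 0)
      = measure_pmf.expectation (map_pmf (\<lambda>obs. obs j) (obs_pmf N Bin P)) (\<lambda>b. if b then v else 0)"
    by simp
  also have "map_pmf (\<lambda>obs. obs j) (obs_pmf N Bin P) = bernoulli_pmf (P (Bin j))"
    unfolding obs_pmf_def using assms by (subst Pi_pmf_component) auto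
  finally show ?thesis
    using assms by simp
qed

lemma indep_vars_obs_indicator:
  "prob_space.indep_vars (measure_pmf (obs_pmf N Bin P)) (\<lambda>_. borel)
     (\<lambda>j obs. if obs j then v j else 0) {1..N}"
proof -
  have "prob_space.indep_vars (measure_pmf (obs_pmf N Bin P)) (\<lambda>_. count_space UNIV)
      (\<lambda>j obs. obs j) {1..N}"
    unfolding obs_pmf_def by (rule indep_vars_Pi_pmf) simp
  then have "prob_space.indep_vars (measure_pmf (obs_pmf N Bin P)) (\<lambda>_. borel)
      (\<lambda>j obs. (\<lambda>b. if b then v j else 0) (obs j)) {1..N}"
    by (rule prob_space.indep_vars_compose2[OF measure_pmf.prob_space_axioms]) simp
  then show ?thesis
    by simp
qed

lemma obs_pmf_lower_tail:
  fixes a c :: "nat \<Rightarrow> real"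
  assumes P_range: "\<forall>j\<in>{1..N}. 0 \<le> P (Bin j) \<and> P (Bin j) \<le> 1"
    and a_range: "\<forall>j\<in>{1..N}. 0 \<le> a j \<and> a j \<le> c j"
    and c_pos: "0 < (\<Sum>j=1..N. (c j)\<^sup>2)" and c_le: "(\<Sum>j=1..N. (c j)\<^sup>2) \<le> C"
    and eps: "0 \<le> eps"
  shows "measure_pmf.prob (obs_pmf N Bin P)
      {obs. (\<Sum>j=1..N. if obs j then a j else 0) \<le> (\<Sum>j=1..N. a j * P (Bin j)) - eps}
    \<le> exp (- 2 * eps\<^sup>2 / C)"
proof -
  interpret Hoeffding_ineq "measure_pmf (obs_pmf N Bin P)" "{1..N}"
    "\<lambda>j obs. if obs j then a j else 0" "\<lambda>_. 0" c
    "\<Sum>j=1..N. measure_pmf.expectation (obs_pmf N Bin P) (\<lambda>obs. if obs j then a j else 0)"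
  proof unfold_locales
    show "prob_space.indep_vars (measure_pmf (obs_pmf N Bin P)) (\<lambda>_. borel)
        (\<lambda>j obs. if obs j then a j else 0) {1..N}"
      by (rule indep_vars_obs_indicator)
    show "AE obs in measure_pmf (obs_pmf N Bin P). (if obs j then a j else 0) \<in> {0..c j}"
      if "j \<in> {1..N}" for j
      using a_range that by (intro AE_I2) fastforce
  qed simp
  have mean: "(\<Sum>j=1..N. measure_pmf.expectation (obs_pmf N Bin P) (\<lambda>obs. if obs j then a j else 0))
      = (\<Sum>j=1..N. a j * P (Bin j))"
    by (intro sum.cong refl expectation_obs_indicator) (use P_range in auto)
  have "measure_pmf.prob (obs_pmf N Bin P)
      {obs. (\<Sum>j=1..N. if obs j then a j else 0) \<le> (\<Sum>j=1..N. a j * P (Bin j)) - eps}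
    \<le> exp (- 2 * eps\<^sup>2 / (\<Sum>j=1..N. (c j)\<^sup>2))"
    using Hoeffding_ineq_le[OF eps] c_pos unfolding mean by simp
  also have "\<dots> \<le> exp (- 2 * eps\<^sup>2 / C)"
    using c_pos c_le by (intro exp_mono divide_left_mono_neg) auto
  finally show ?thesis .
qed

lemma true_risk_le_vir_mean_add:
  assumes bins: "\<forall>j\<in>{1..N}. Bin j \<in> {1..K}"
    and nonempty_bins: "\<forall>i\<in>{1..K}. binU N Bin i \<noteq> {}"
    and d_range: "\<forall>j\<in>{1..N}. 0 \<le> d j \<and> d j \<le> Delta"
  shows "true_risk K N Bin d
    \<le> vir_mean K N Bin P Pt d
      + Delta / real K * (\<Sum>i=1..K. \<bar>1 - P i / Pt i\<bar>)"
proof -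
  have "true_risk K N Bin d - vir_mean K N Bin P Pt d
      = (\<Sum>j=1..N. bin_weight K N Bin j * (d j * (1 - P (Bin j) / Pt (Bin j))))"
    by (simp add: true_risk_eq_sum_bin_weight[OF bins] vir_mean_def sum_subtractf[symmetric]
        algebra_simps)
  also have "\<dots> \<le> (\<Sum>j=1..N. bin_weight K N Bin j * (Delta * \<bar>1 - P (Bin j) / Pt (Bin j)\<bar>))"
  proof (intro sum_mono mult_left_mono bin_weight_nonneg)
    fix j assume "j \<in> {1..N}"
    then have "0 \<le> d j" "d j \<le> Delta"
      using d_range by auto
    then have "d j * (1 - P (Bin j) / Pt (Bin j)) \<le> d j * \<bar>1 - P (Bin j) / Pt (Bin j)\<bar>"
      by (intro mult_left_mono) auto
    also have "\<dots> \<le> Delta * \<bar>1 - P (Bin j) / Pt (Bin j)\<bar>"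
      using \<open>d j \<le> Delta\<close> by (intro mult_right_mono) auto
    finally show "d j * (1 - P (Bin j) / Pt (Bin j)) \<le> Delta * \<bar>1 - P (Bin j) / Pt (Bin j)\<bar>" .
  qed
  also have "\<dots> = (\<Sum>i=1..K. Delta * \<bar>1 - P i / Pt i\<bar>) / real K"
    by (rule sum_bin_weight[OF bins nonempty_bins])
  also have "\<dots> = Delta / real K * (\<Sum>i=1..K. \<bar>1 - P i / Pt i\<bar>)"
    by (simp add: sum_distrib_left sum_divide_distrib)
  finally show ?thesis
    by simp
qed

lemma vir_risk_lower_tail:
  assumes bins: "\<forall>j\<in>{1..N}. Bin j \<in> {1..K}"
    and nonempty_bins: "\<forall>i\<in>{1..K}. binU N Bin i \<noteq> {}"
    and P_range: "\<forall>i\<in>{1..K}. 0 \<le> P i \<and> P i \<le> 1"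
    and Pt_pos: "\<forall>i\<in>{1..K}. 0 < Pt i"
    and d_range: "\<forall>j\<in>{1..N}. 0 \<le> d j \<and> d j \<le> Delta"
    and "0 < K" "0 < Delta" "0 \<le> t"
  shows "measure_pmf.prob (obs_pmf N Bin P)
      {obs. vir_risk K N Bin Pt obs d
        \<le> vir_mean K N Bin P Pt d
          - Delta / real K * sqrt (t / 2) * sqrt (\<Sum>i=1..K. 1 / (Pt i)\<^sup>2)}
    \<le> exp (- t)"
proof -
  define a where "a j = bin_weight K N Bin j * d j / Pt (Bin j)" for j
  define c where "c j = bin_weight K N Bin j * (Delta / Pt (Bin j))" for j
  define C where "C = (Delta / real K)\<^sup>2 * (\<Sum>i=1..K. 1 / (Pt i)\<^sup>2)"
  define eps where "eps = Delta / real K * sqrt (t / 2) * sqrt (\<Sum>i=1..K. 1 / (Pt i)\<^sup>2)"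
  have Pt_Bin: "0 < Pt (Bin j)" if "j \<in> {1..N}" for j
    using that bins Pt_pos by blast
  have a_range: "\<forall>j\<in>{1..N}. 0 \<le> a j \<and> a j \<le> c j"
  proof
    fix j assume j: "j \<in> {1..N}"
    have "0 \<le> d j" "d j \<le> Delta"
      using j d_range by auto
    then show "0 \<le> a j \<and> a j \<le> c j"
      using Pt_Bin[OF j] bin_weight_nonneg[of K N Bin j] unfolding a_def c_def times_divide_eq_right
      by (auto intro: mult_left_mono divide_right_mono)
  qed
  have c_pos: "0 < (\<Sum>j=1..N. (c j)\<^sup>2)"
    unfolding c_def using Pt_pos \<open>0 < K\<close> \<open>0 < Delta\<close>
    by (intro sum_squares_bin_weight_pos[OF nonempty_bins]) auto
  have c_le: "(\<Sum>j=1..N. (c j)\<^sup>2) \<le> C"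
    using sum_squares_bin_weight_le[OF bins nonempty_bins, of "\<lambda>i. Delta / Pt i"]
    by (simp add: c_def C_def power_divide sum_divide_distrib sum_distrib_left mult.commute)
  have "eps\<^sup>2 = C * (t / 2)"
    unfolding eps_def C_def power_mult_distrib using \<open>0 \<le> t\<close> by (simp add: sum_nonneg)
  then have exponent: "- 2 * eps\<^sup>2 / C = - t"
    using c_pos c_le by (simp add: field_simps)
  have "0 \<le> eps"
    using \<open>0 < Delta\<close> \<open>0 \<le> t\<close> by (simp add: eps_def sum_nonneg)
  moreover have "\<forall>j\<in>{1..N}. 0 \<le> P (Bin j) \<and> P (Bin j) \<le> 1"
    using P_range bins by fastforce
  ultimately have tail: "measure_pmf.prob (obs_pmf N Bin P)
      {obs. (\<Sum>j=1..N. if obs j then a j else 0) \<le> (\<Sum>j=1..N. a j * P (Bin j)) - eps}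
    \<le> exp (- 2 * eps\<^sup>2 / C)"
    using a_range c_pos c_le by (intro obs_pmf_lower_tail)
  have vir: "vir_risk K N Bin Pt obs d = (\<Sum>j=1..N. if obs j then a j else 0)" for obs
    unfolding a_def by (rule vir_risk_eq_sum_bin_weight[OF bins])
  show ?thesis
    using tail unfolding vir vir_mean_def eps_def[symmetric] exponent[symmetric] a_def .
qed

lemma measure_pmf_all_notin_ge:
  assumes "finite H" "\<And>h. h \<in> H \<Longrightarrow> measure_pmf.prob Q (A h) \<le> b"
  shows "1 - real (card H) * b \<le> measure_pmf.prob Q {x. \<forall>h\<in>H. x \<notin> A h}"
proof -
  have "measure_pmf.prob Q (\<Union>h\<in>H. A h) \<le> (\<Sum>h\<in>H. measure_pmf.prob Q (A h))"
    using assms(1) by (rule measure_pmf.finite_measure_subadditive_finite) simp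
  also have "\<dots> \<le> (\<Sum>h\<in>H. b)"
    using assms(2) by (rule sum_mono)
  finally have "measure_pmf.prob Q (\<Union>h\<in>H. A h) \<le> real (card H) * b"
    by simp
  moreover have "{x. \<forall>h\<in>H. x \<notin> A h} = space (measure_pmf Q) - (\<Union>h\<in>H. A h)"
    by auto
  ultimately show ?thesis
    using measure_pmf.prob_compl[of "\<Union>h\<in>H. A h" Q] by simp
qed

lemma risk_bound_uniform:
  fixes H :: "'h set" and delta :: "'h \<Rightarrow> nat \<Rightarrow> real"
  assumes bins: "\<forall>j\<in>{1..N}. Bin j \<in> {1..K}"
    and nonempty_bins: "\<forall>i\<in>{1..K}. binU N Bin i \<noteq> {}"
    and P_range: "\<forall>i\<in>{1..K}. 0 \<le> P i \<and> P i \<le> 1"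
    and Pt_pos: "\<forall>i\<in>{1..K}. 0 < Pt i"
    and "finite H" "H \<noteq> {}" "0 < Delta"
    and delta_range: "\<forall>h\<in>H. \<forall>j\<in>{1..N}. 0 \<le> delta h j \<and> delta h j \<le> Delta"
    and "0 < eta" "eta < 1"
  shows "measure_pmf.prob (obs_pmf N Bin P)
      {obs. \<forall>h\<in>H. true_risk K N Bin (delta h)
        \<le> vir_risk K N Bin Pt obs (delta h)
          + Delta / real K * (\<Sum>i = 1..K. \<bar>1 - P i / Pt i\<bar>)
          + Delta / real K * sqrt (ln (2 * real (card H) / eta) / 2)
              * sqrt (\<Sum>i = 1..K. 1 / (Pt i)\<^sup>2)}
    \<ge> 1 - eta"
proof (cases "K = 0")
  case True
  then show ?thesis
    using \<open>0 < eta\<close> by (simp add: true_risk_def vir_risk_def)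
next
  case False
  define L where "L = ln (2 * real (card H) / eta)"
  define eps where "eps = Delta / real K * sqrt (L / 2) * sqrt (\<Sum>i=1..K. 1 / (Pt i)\<^sup>2)"
  define bad where
    "bad h = {obs. vir_risk K N Bin Pt obs (delta h) \<le> vir_mean K N Bin P Pt (delta h) - eps}" for h
  have card_H: "1 \<le> real (card H)"
    using \<open>finite H\<close> \<open>H \<noteq> {}\<close> by (simp add: Suc_leI card_gt_0_iff)
  then have "0 \<le> L"
    using \<open>0 < eta\<close> \<open>eta < 1\<close> by (simp add: L_def field_simps)
  have bad_prob: "measure_pmf.prob (obs_pmf N Bin P) (bad h) \<le> eta / (2 * real (card H))"
    if "h \<in> H" for h
  proof -
    have "measure_pmf.prob (obs_pmf N Bin P) (bad h) \<le> exp (- L)"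
      unfolding bad_def eps_def
      using that delta_range False \<open>0 < Delta\<close> \<open>0 \<le> L\<close>
      by (intro vir_risk_lower_tail[OF bins nonempty_bins P_range Pt_pos]) auto
    also have "exp (- L) = eta / (2 * real (card H))"
      using card_H \<open>0 < eta\<close> by (simp add: L_def exp_minus)
    finally show ?thesis .
  qed
  have "1 - eta \<le> 1 - real (card H) * (eta / (2 * real (card H)))"
    using card_H \<open>0 < eta\<close> by simp
  also have "\<dots> \<le> measure_pmf.prob (obs_pmf N Bin P) {obs. \<forall>h\<in>H. obs \<notin> bad h}"
    using \<open>finite H\<close> bad_prob by (rule measure_pmf_all_notin_ge)
  also have "\<dots> \<le> measure_pmf.prob (obs_pmf N Bin P) {obs. \<forall>h\<in>H. true_risk K N Bin (delta h)
      \<le> vir_risk K N Bin Pt obs (delta h) + Delta / real K * (\<Sum>i = 1..K. \<bar>1 - P i / Pt i\<bar>) + eps}"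
  proof (intro measure_pmf.finite_measure_mono subsetI CollectI ballI)
    fix obs h assume "obs \<in> {obs. \<forall>h\<in>H. obs \<notin> bad h}" "h \<in> H"
    moreover have "true_risk K N Bin (delta h)
        \<le> vir_mean K N Bin P Pt (delta h) + Delta / real K * (\<Sum>i=1..K. \<bar>1 - P i / Pt i\<bar>)"
      using \<open>h \<in> H\<close> delta_range by (intro true_risk_le_vir_mean_add[OF bins nonempty_bins]) auto
    ultimately show "true_risk K N Bin (delta h)
        \<le> vir_risk K N Bin Pt obs (delta h) + Delta / real K * (\<Sum>i = 1..K. \<bar>1 - P i / Pt i\<bar>) + eps"
      by (auto simp: bad_def)
  qed simp
  finally show ?thesis
    unfolding eps_def L_def .
qed

theorem mainTheorem1:
  fixes K N :: nat and Bin :: "nat \<Rightarrow> nat" and P Pt :: "nat \<Rightarrow> real"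
    and H :: "'h set" and delta :: "'h \<Rightarrow> nat \<Rightarrow> real" and Delta eta :: real
    and erm :: "(nat \<Rightarrow> bool) \<Rightarrow> 'h"
  assumes bins: "\<forall>j\<in>{1..N}. Bin j \<in> {1..K}"
    and nonempty_bins: "\<forall>i\<in>{1..K}. binU N Bin i \<noteq> {}"
    and P_range: "\<forall>i\<in>{1..K}. 0 < P i \<and> P i \<le> 1"
    and Pt_pos: "\<forall>i\<in>{1..K}. 0 < Pt i"
    and H_fin: "finite H" and H_ne: "H \<noteq> {}"
    and Delta_pos: "0 < Delta"
    and delta_range: "\<forall>h\<in>H. \<forall>j\<in>{1..N}. 0 \<le> delta h j \<and> delta h j \<le> Delta"
    and erm_in: "\<forall>obs. erm obs \<in> H"
    and erm_min: "\<forall>obs. \<forall>h\<in>H. vir_risk K N Bin Pt obs (delta (erm obs)) \<le> vir_risk K N Bin Pt obs (delta h)"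
    and eta: "0 < eta" "eta < 1"
  shows "measure_pmf.prob (obs_pmf N Bin P)
           {obs. true_risk K N Bin (delta (erm obs))
               \<le> vir_risk K N Bin Pt obs (delta (erm obs))
                 + Delta / real K * (\<Sum>i = 1..K. \<bar>1 - P i / Pt i\<bar>)
                 + Delta / real K * sqrt (ln (2 * real (card H) / eta) / 2)
                     * sqrt (\<Sum>i = 1..K. 1 / (Pt i)\<^sup>2)}
         \<ge> 1 - eta"
proof -
  have "\<forall>i\<in>{1..K}. 0 \<le> P i \<and> P i \<le> 1"
    using P_range by fastforce
  then have uniform: "measure_pmf.prob (obs_pmf N Bin P)
      {obs. \<forall>h\<in>H. true_risk K N Bin (delta h)
        \<le> vir_risk K N Bin Pt obs (delta h)
          + Delta / real K * (\<Sum>i = 1..K. \<bar>1 - P i / Pt i\<bar>)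
          + Delta / real K * sqrt (ln (2 * real (card H) / eta) / 2)
              * sqrt (\<Sum>i = 1..K. 1 / (Pt i)\<^sup>2)}
    \<ge> 1 - eta"
    by (rule risk_bound_uniform[OF bins nonempty_bins _ Pt_pos H_fin H_ne Delta_pos delta_range eta])
  show ?thesis
    using uniform by (rule order_trans) (intro measure_pmf.finite_measure_mono; use erm_in in auto)
qed

end
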